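(* Let $n\ge1$ with $\gcd(n,q)=1$, $\mathbb{F}\supseteq\mathbb{F}_q$ a field containing the $n$-th roots of unity, $\gamma$ a primitive $n$-th root of unity, $\ell\ge2$ and $t\ge0$ integers. Let $a,b\le n$ be positive integers with $\gcd(a,n)=\gcd(b,n)=1$, and let $S,R\subseteq\{1,\dots,n\}$ satisfy $|\overline{S}|\le|S|+\mathrm{d}_R-2$, $|S|>t$ and $\mathrm{d}_S>t$. Let $A,B\subseteq\mathbb{F}^n$ be the cyclic codes with generating sets $aS$ and $bR$ respectively, let $\tilde C=\{\mathbf{c}\in\mathbb{F}^n: M(aS+bR)\mathbf{c}^T=0\}$ and $k=\dim\tilde C$. Assume (i) $B^\perp*\tilde C^{i}\subsetneq\mathbb{F}^n$ for all $i\in\{1,\dots,\ell-1\}$; (ii) every nonzero cyclic subcode of $B$ is non-degenerated. Define integers $\delta$ and $\gamma_1,\dots,\gamma_{\ell-1}$ by $n-k=|S|+|R|-1+\delta$ and $\dim B=\dim\big((B^\perp*\tilde C^i)^\perp\big)+i\dim\tilde C-i+\gamma_i$ for $i=1,\dots,\ell-1$. If $$t\le \ell n-\Big[\frac{\ell(\ell+1)}{2}(k-1)+\ell(|S|+\delta)+\sum_{i=1}^{\ell-1}\gamma_i\Big],$$ then $(A,B)$ is an $\ell$-power $t$-error locating pair for $\tilde C$.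
   Context: For $T=\{i_1,\dots,i_m\}\subseteq\{1,\dots,n\}$ (indices mod $n$), $M(T)$ is the $m\times n$ matrix with rows $(1,\gamma^{i_j},\dots,\gamma^{(n-1)i_j})$; the code with generating set $T$ is $\{\mathbf{u}M(T):\mathbf{u}\in\mathbb{F}^m\}$. $\mathrm{d}_T$ denotes the minimum distance of $\{\mathbf{c}\in\mathbb{F}^n:M(T)\mathbf{c}^T=0\}$. $\overline{S}$ is the smallest set of consecutive indices modulo $n$ containing $S$; $aS=\{as\bmod n:s\in S\}$; $S+R=\{s+r\bmod n\}$. Componentwise product $*$, $X*Y$ the span of products, $X^1=X$, $X^i=X*X^{i-1}$; duals w.r.t. $\langle\mathbf{u},\mathbf{v}\rangle=\sum u_iv_i$ on $\mathbb{F}^n$; $\mathrm{d}$ minimum distance. A code $H$ is degenerated if $\dim\{\mathbf{x}:\mathbf{x}*H\subseteq H\}>1$, equivalently it is a direct sum of nonzero subcodes with disjoint supports or every generator matrix has a zero column. A pair $(A,B)$ of codes in $\mathbb{F}^n$ is an $\ell$-power $t$-error locating pair for a code $C$ if: (1) $A*B\subseteq C^\perp$; (2) $\dim A>t$; (3) $\mathrm{d}(A^\perp)>t$; (4) $\mathrm{d}(A)+\mathrm{d}(C)>n$; (5) $\dim B+\sum_{i=2}^{\ell}\dim(B^\perp*C^{i-1})^\perp\ge t$. *)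

theory Defs
  imports Complex_Main "HOL-Library.Function_Algebras"
begin

text \<open>Vectors of \<open>F^n\<close> are modelled as functions \<open>nat \<Rightarrow> 'a\<close> that vanish
  outside the index range \<open>{0..<n}\<close>; coordinate \<open>k\<close> corresponds to the
  column \<open>(\<gamma>^i)^k\<close> of \<open>M(T)\<close>, \<open>k = 0..n-1\<close>.\<close>

definition Fn :: "nat \<Rightarrow> (nat \<Rightarrow> 'a::field) set" where
  "Fn n = {v. \<forall>i\<ge>n. v i = 0}"

definition smul :: "'a::field \<Rightarrow> (nat \<Rightarrow> 'a) \<Rightarrow> (nat \<Rightarrow> 'a)" where
  "smul c v = (\<lambda>i. c * v i)"

definition lspan :: "(nat \<Rightarrow> 'a::field) set \<Rightarrow> (nat \<Rightarrow> 'a) set" where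
  "lspan X = module.span smul X"

definition is_subspace :: "(nat \<Rightarrow> 'a::field) set \<Rightarrow> bool" where
  "is_subspace X = module.subspace smul X"

definition cdim :: "(nat \<Rightarrow> 'a::field) set \<Rightarrow> nat" where
  "cdim X = vector_space.dim smul X"

definition vmul :: "(nat \<Rightarrow> 'a::field) \<Rightarrow> (nat \<Rightarrow> 'a) \<Rightarrow> (nat \<Rightarrow> 'a)" where
  "vmul u v = (\<lambda>i. u i * v i)"

definition starprod :: "(nat \<Rightarrow> 'a::field) set \<Rightarrow> (nat \<Rightarrow> 'a) set \<Rightarrow> (nat \<Rightarrow> 'a) set" where
  "starprod X Y = lspan {vmul x y | x y. x \<in> X \<and> y \<in> Y}"

text \<open>Powers \<open>X^1 = X\<close>, \<open>X^i = X * X^(i-1)\<close>; the value at 0 is irrelevant (never used).\<close>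
fun cpow :: "(nat \<Rightarrow> 'a::field) set \<Rightarrow> nat \<Rightarrow> (nat \<Rightarrow> 'a) set" where
  "cpow X 0 = X"
| "cpow X (Suc 0) = X"
| "cpow X (Suc (Suc i)) = starprod X (cpow X (Suc i))"

definition ip :: "nat \<Rightarrow> (nat \<Rightarrow> 'a::field) \<Rightarrow> (nat \<Rightarrow> 'a) \<Rightarrow> 'a" where
  "ip n u v = (\<Sum>i<n. u i * v i)"

definition dual :: "nat \<Rightarrow> (nat \<Rightarrow> 'a::field) set \<Rightarrow> (nat \<Rightarrow> 'a) set" where
  "dual n C = {v \<in> Fn n. \<forall>c\<in>C. ip n c v = 0}"

definition wt :: "nat \<Rightarrow> (nat \<Rightarrow> 'a::field) \<Rightarrow> nat" where
  "wt n v = card {i. i < n \<and> v i \<noteq> 0}"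

text \<open>Minimum distance; for the zero code we use the convention \<open>d = n + 1\<close>
  (standing in for \<open>\<infinity>\<close>; every nonzero codeword has weight \<open>\<le> n\<close>).\<close>
definition mindist :: "nat \<Rightarrow> (nat \<Rightarrow> 'a::field) set \<Rightarrow> nat" where
  "mindist n C = (if {c \<in> C. c \<noteq> 0} = {} then n + 1
                  else Min (wt n ` {c \<in> C. c \<noteq> 0}))"

text \<open>Row of \<open>M(T)\<close> for index \<open>i\<close>: \<open>(1, \<gamma>^i, \<dots>, \<gamma>^((n-1)i))\<close>.\<close>
definition vrow :: "nat \<Rightarrow> 'a::field \<Rightarrow> nat \<Rightarrow> (nat \<Rightarrow> 'a)" where
  "vrow n g i = (\<lambda>k. if k < n then g ^ (i * k) else 0)"

definition gen_code :: "nat \<Rightarrow> 'a::field \<Rightarrow> nat set \<Rightarrow> (nat \<Rightarrow> 'a) set" where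
  "gen_code n g T = lspan (vrow n g ` T)"

definition ker_code :: "nat \<Rightarrow> 'a::field \<Rightarrow> nat set \<Rightarrow> (nat \<Rightarrow> 'a) set" where
  "ker_code n g T = {c \<in> Fn n. \<forall>i\<in>T. (\<Sum>k<n. g ^ (i * k) * c k) = 0}"

definition dT :: "nat \<Rightarrow> 'a::field \<Rightarrow> nat set \<Rightarrow> nat" where
  "dT n g T = mindist n (ker_code n g (T :: nat set) :: (nat \<Rightarrow> 'a) set)"

definition smult_mod :: "nat \<Rightarrow> nat \<Rightarrow> nat set \<Rightarrow> nat set" where
  "smult_mod n a S = (\<lambda>s. a * s mod n) ` S"

definition sumset_mod :: "nat \<Rightarrow> nat set \<Rightarrow> nat set \<Rightarrow> nat set" where
  "sumset_mod n S R = {(s + r) mod n | s r. s \<in> S \<and> r \<in> R}"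

text \<open>\<open>|S-bar|\<close>: size of the smallest set of consecutive indices modulo \<open>n\<close>
  containing \<open>S\<close>.\<close>
definition cyc_interval :: "nat \<Rightarrow> nat \<Rightarrow> nat \<Rightarrow> nat set" where
  "cyc_interval n s L = {(s + j) mod n | j. j < L}"

definition closure_card :: "nat \<Rightarrow> nat set \<Rightarrow> nat" where
  "closure_card n S = Min {card (cyc_interval n s L) | s L.
       (\<lambda>x. x mod n) ` S \<subseteq> cyc_interval n s L}"

definition cshift :: "nat \<Rightarrow> (nat \<Rightarrow> 'a::field) \<Rightarrow> (nat \<Rightarrow> 'a)" where
  "cshift n v = (\<lambda>i. if i < n then v ((i + n - 1) mod n) else 0)"

definition is_cyclic :: "nat \<Rightarrow> (nat \<Rightarrow> 'a::field) set \<Rightarrow> bool" where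
  "is_cyclic n D \<longleftrightarrow> is_subspace D \<and> D \<subseteq> Fn n \<and> (\<forall>v\<in>D. cshift n v \<in> D)"

definition degenerated :: "nat \<Rightarrow> (nat \<Rightarrow> 'a::field) set \<Rightarrow> bool" where
  "degenerated n H \<longleftrightarrow> cdim {x \<in> Fn n. \<forall>h\<in>H. vmul x h \<in> H} > 1"

definition locating_pair ::
  "nat \<Rightarrow> nat \<Rightarrow> nat \<Rightarrow> (nat \<Rightarrow> 'a::field) set \<Rightarrow> (nat \<Rightarrow> 'a) set \<Rightarrow> (nat \<Rightarrow> 'a) set \<Rightarrow> bool"
  where
  "locating_pair n l t A B C \<longleftrightarrow>
     starprod A B \<subseteq> dual n C \<and>
     cdim A > t \<and>
     mindist n (dual n A) > t \<and>
     mindist n A + mindist n C > n \<and>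
     cdim B + (\<Sum>i=2..l. cdim (dual n (starprod (dual n B) (cpow C (i - 1))))) \<ge> t"

definition has_subfield_card :: "'a::field itself \<Rightarrow> nat \<Rightarrow> bool" where
  "has_subfield_card _ q \<longleftrightarrow> (\<exists>K :: 'a set. finite K \<and> card K = q \<and> 0 \<in> K \<and> 1 \<in> K \<and>
      (\<forall>x\<in>K. \<forall>y\<in>K. x + y \<in> K \<and> x * y \<in> K) \<and> (\<forall>x\<in>K. - x \<in> K \<and> inverse x \<in> K))"

end

theory Submission
  imports Defs "HOL-Computational_Algebra.Polynomial" "HOL-Number_Theory.Cong"
begin

text \<open>
  Write \<open>\<beta> = \<gamma>^a\<close> and place \<open>S\<close> in a cyclic interval of length \<open>L = |S-bar|\<close>
  starting at \<open>s\<^sub>0\<close>, so that \<open>s = s\<^sub>0 + j(s) mod n\<close> with \<open>j(s) < L\<close>. The row of \<open>M(aS)\<close>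
  indexed by \<open>as\<close> is \<open>k \<mapsto> \<beta>^(s\<^sub>0 k) (\<beta>^k)^j(s)\<close>, so the words of \<open>A\<close> are
  \<open>k \<mapsto> \<beta>^(s\<^sub>0 k) p(\<beta>^k)\<close> with \<open>deg p < L\<close>: a rescaled Reed-Solomon code, whose nonzero
  words have fewer than \<open>L\<close> zeros, hence \<open>d(A) \<ge> n - L + 1\<close>.

  Dually, multiplying a word \<open>c\<close> of \<open>C\<close> coordinatewise by \<open>k \<mapsto> \<beta>^(s\<^sub>0 k) h(\<beta>^k)\<close>, where \<open>h\<close>
  only has monomials \<open>x^j(s)\<close>, gives a word annihilated by \<open>M(bR)\<close>, so it is zero or has weight
  at least \<open>d\<^sub>R\<close>. If \<open>c \<noteq> 0\<close> had weight at most \<open>L\<close>, we could choose such an \<open>h\<close> vanishing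
  at all but at most \<open>d\<^sub>R - 1\<close> points of the support of \<open>c\<close>, but not at all of them: this is a
  homogeneous linear system with more unknowns than equations precisely because
  \<open>|S-bar| \<le> |S| + d\<^sub>R - 2\<close>. Hence \<open>d(C) > L\<close> and \<open>d(A) + d(C) > n\<close>.

  The other conditions are routine: products of rows of \<open>M(aS)\<close> and \<open>M(bR)\<close> are rows of
  \<open>M(aS + bR)\<close>; the rows of \<open>M(T)\<close> are independent (Vandermonde), so \<open>dim A = |S|\<close> and
  \<open>dim B = |R|\<close>; multiplying indices by the unit \<open>a\<close> permutes coordinates, so the dual of \<open>A\<close>
  has distance at least \<open>d\<^sub>S\<close>; and condition (5) is an identity once the definitions of \<open>\<delta>\<close>
  and \<open>\<gamma>\<^sub>i\<close> are unfolded.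
\<close>

section \<open>Codes as subspaces of \<open>F\<^sup>n\<close>\<close>

interpretation vs: vector_space "smul :: 'a::field \<Rightarrow> (nat \<Rightarrow> 'a) \<Rightarrow> _"
  by unfold_locales (auto simp: smul_def fun_eq_iff algebra_simps)

lemma lspan_eq_span: "lspan X = vs.span X"
  by (simp add: lspan_def)

lemma sum_fun_apply: "(\<Sum>v\<in>V. f v) k = (\<Sum>v\<in>V. f v k)"
  by (induct V rule: infinite_finite_induct) auto

lemma lspan_image_coeffs:
  assumes "finite T" "x \<in> lspan (f ` T)"
  obtains u where "x = (\<lambda>k. \<Sum>t\<in>T. u t * f t k)"
proof -
  from assms(2) have "\<exists>u. x = (\<lambda>k. \<Sum>t\<in>T. u t * f t k)"
    unfolding lspan_eq_span
  proof (induction rule: vs.span_induct_alt)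
    case base
    show ?case
      by (rule exI[of _ "\<lambda>_. 0"]) (simp add: fun_eq_iff)
  next
    case (step c y x)
    then obtain u where u: "x = (\<lambda>k. \<Sum>t\<in>T. u t * f t k)"
      by blast
    from step obtain t0 where t0: "t0 \<in> T" "y = f t0"
      by blast
    have "smul c y + x = (\<lambda>k. \<Sum>t\<in>T. (u t + (if t = t0 then c else 0)) * f t k)"
    proof
      fix k
      have "(\<Sum>t\<in>T. (u t + (if t = t0 then c else 0)) * f t k)
          = (\<Sum>t\<in>T. u t * f t k) + (\<Sum>t\<in>T. if t = t0 then c * f t k else 0)"
        unfolding sum.distrib[symmetric] by (rule sum.cong) (auto simp: distrib_right)
      then show "(smul c y + x) k = (\<Sum>t\<in>T. (u t + (if t = t0 then c else 0)) * f t k)"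
        using t0 assms(1) by (simp add: u smul_def)
    qed
    then show ?case
      by (rule exI[of _ "\<lambda>t. u t + (if t = t0 then c else 0)"])
  qed
  with that show ?thesis
    by blast
qed

lemma ip_add_right: "ip n c (x + y) = ip n c x + ip n c y"
  unfolding ip_def by (simp add: sum.distrib distrib_left)

lemma ip_smul_right: "ip n c (smul a x) = a * ip n c x"
  unfolding ip_def smul_def by (simp add: sum_distrib_left ac_simps)

lemma subspace_dual: "vs.subspace (dual n C)"
  unfolding vs.subspace_def
proof (intro conjI ballI allI)
  show "0 \<in> dual n C"
    by (simp add: dual_def Fn_def ip_def)
next
  fix x y assume "x \<in> dual n C" "y \<in> dual n C"
  then show "x + y \<in> dual n C"
    by (simp add: dual_def Fn_def ip_add_right)
next
  fix a x assume "x \<in> dual n C"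
  then show "smul a x \<in> dual n C"
    by (auto simp: dual_def ip_smul_right) (simp add: Fn_def smul_def)
qed

lemma vmul_commute: "vmul x y = vmul y x"
  by (simp add: vmul_def fun_eq_iff mult.commute)

lemma subspace_vmul_preimage:
  assumes "vs.subspace D"
  shows "vs.subspace {y. vmul x y \<in> D}"
proof -
  have "vmul x (y + z) = vmul x y + vmul x z" "vmul x (smul c y) = smul c (vmul x y)"
    "vmul x 0 = 0" for y z :: "nat \<Rightarrow> 'a" and c
    by (auto simp: vmul_def smul_def fun_eq_iff algebra_simps)
  with assms show ?thesis
    unfolding vs.subspace_def by auto
qed

lemma starprod_lspan_subset:
  assumes D: "vs.subspace D" and XY: "\<And>x y. x \<in> X \<Longrightarrow> y \<in> Y \<Longrightarrow> vmul x y \<in> D"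
  shows "starprod (lspan X) (lspan Y) \<subseteq> D"
proof -
  have "vmul x y \<in> D" if x: "x \<in> vs.span X" and y: "y \<in> vs.span Y" for x y
  proof -
    have "vmul x' y \<in> D" if "x' \<in> X" for x'
      using vs.span_subspace_induct[OF y subspace_vmul_preimage[OF D]] XY[OF that] by blast
    then have "x \<in> {x. vmul y x \<in> D}"
      by (intro vs.span_subspace_induct[OF x subspace_vmul_preimage[OF D]])
        (simp add: vmul_commute)
    then show ?thesis
      by (simp add: vmul_commute)
  qed
  then show ?thesis
    unfolding starprod_def lspan_eq_span by (intro vs.span_minimal[OF _ D]) blast
qed

lemma card_independent_supported_le:
  assumes G: "finite G" and V: "vs.independent V" and supp: "\<And>v j. v \<in> V \<Longrightarrow> j \<notin> G \<Longrightarrow> v j = 0"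
  shows "card V \<le> card G"
proof -
  define e where "e j = (\<lambda>k. if k = j then 1 else 0 :: 'a)" for j :: nat
  have "v \<in> vs.span (e ` G)" if "v \<in> V" for v
  proof -
    have "v = (\<Sum>j\<in>G. smul (v j) (e j))"
      using G supp[OF that] by (auto simp: fun_eq_iff e_def smul_def sum_fun_apply if_distrib
          sum.delta cong: if_cong)
    moreover have "(\<Sum>j\<in>G. smul (v j) (e j)) \<in> vs.span (e ` G)"
      by (intro vs.span_sum vs.span_scale) (simp add: vs.span_base)
    ultimately show ?thesis
      by simp
  qed
  then have "card V \<le> card (e ` G)"
    using vs.independent_span_bound[OF finite_imageI[OF G] V] by blast
  also have "\<dots> \<le> card G"
    by (rule card_image_le[OF G])
  finally show ?thesis .
qed

section \<open>Weights and minimum distance\<close>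

lemma wt_le: "wt n v \<le> n"
  unfolding wt_def by (rule order.trans[OF card_mono[of "{..<n}"]]) auto

lemma wt_pos:
  assumes "v \<in> Fn n" "v \<noteq> 0"
  shows "0 < wt n v"
proof -
  obtain i where i: "v i \<noteq> 0"
    using assms(2) by (auto simp: fun_eq_iff)
  have "i < n"
  proof (rule ccontr)
    assume "\<not> i < n"
    with assms(1) i show False
      by (simp add: Fn_def)
  qed
  with i show ?thesis
    unfolding wt_def by (auto simp: card_gt_0_iff)
qed

lemma wt_zero [simp]: "wt n 0 = 0"
  by (simp add: wt_def)

lemma wt_add_card_zeros: "wt n x + card {k. k < n \<and> x k = 0} = n"
proof -
  have "card {k. k < n \<and> x k \<noteq> 0} + card {k. k < n \<and> x k = 0}
      = card ({k. k < n \<and> x k \<noteq> 0} \<union> {k. k < n \<and> x k = 0})"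
    by (rule card_Un_disjoint[symmetric]) auto
  also have "{k. k < n \<and> x k \<noteq> 0} \<union> {k. k < n \<and> x k = 0} = {..<n}"
    by auto
  finally show ?thesis
    by (simp add: wt_def)
qed

lemma finite_wt_image: "finite (wt n ` C)"
  by (rule finite_subset[of _ "{..n}"]) (auto simp: wt_le)

lemma mindist_le_wt: "c \<in> C \<Longrightarrow> c \<noteq> 0 \<Longrightarrow> mindist n C \<le> wt n c"
  unfolding mindist_def by (auto intro: Min_le[OF finite_wt_image])

lemma mindist_le_Suc: "mindist n C \<le> n + 1"
proof (cases "{c \<in> C. c \<noteq> 0} = {}")
  case False
  then obtain c where "c \<in> C" "c \<noteq> 0"
    by blast
  then show ?thesis
    using mindist_le_wt[of c C n] wt_le[of n c] by linarith
qed (simp add: mindist_def)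

lemma le_mindistI:
  assumes "\<And>c. c \<in> C \<Longrightarrow> c \<noteq> 0 \<Longrightarrow> m \<le> wt n c" "m \<le> n + 1"
  shows "m \<le> mindist n C"
  unfolding mindist_def using assms by (auto intro: Min.boundedI[OF finite_wt_image])

lemma bij_betw_mult_mod:
  fixes e n :: nat
  assumes "coprime e n"
  shows "bij_betw (\<lambda>k. e * k mod n) {..<n} {..<n}"
proof -
  have inj: "inj_on (\<lambda>k. e * k mod n) {..<n}"
  proof (rule inj_onI)
    fix x y assume "x \<in> {..<n}" "y \<in> {..<n}" "e * x mod n = e * y mod n"
    moreover have "x mod n = y mod n"
      using cong_mult_lcancel_nat[OF assms] \<open>e * x mod n = e * y mod n\<close>
      by (simp add: cong_def)
    ultimately show "x = y"
      by simp
  qed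
  have "(\<lambda>k. e * k mod n) ` {..<n} \<subseteq> {..<n}"
    by (cases "n = 0") auto
  with inj show ?thesis
    unfolding bij_betw_def by (simp add: endo_inj_surj)
qed

lemma wt_reindex:
  assumes f: "bij_betw f {..<n} {..<n}"
  shows "wt n (\<lambda>j. if j < n then v (f j) else 0) = wt n v"
proof -
  have img: "f ` {j. j < n \<and> v (f j) \<noteq> 0} = {k. k < n \<and> v k \<noteq> 0}"
  proof
    show "f ` {j. j < n \<and> v (f j) \<noteq> 0} \<subseteq> {k. k < n \<and> v k \<noteq> 0}"
      using bij_betwE[OF f] by auto
    show "{k. k < n \<and> v k \<noteq> 0} \<subseteq> f ` {j. j < n \<and> v (f j) \<noteq> 0}"
    proof
      fix k assume k: "k \<in> {k. k < n \<and> v k \<noteq> 0}"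
      then have "k \<in> f ` {..<n}"
        using bij_betw_imp_surj_on[OF f] by simp
      with k show "k \<in> f ` {j. j < n \<and> v (f j) \<noteq> 0}"
        by auto
    qed
  qed
  have "inj_on f {j. j < n \<and> v (f j) \<noteq> 0}"
    using bij_betw_imp_inj_on[OF f] by (rule inj_on_subset) auto
  then have "wt n (\<lambda>j. if j < n then v (f j) else 0) = card (f ` {j. j < n \<and> v (f j) \<noteq> 0})"
    unfolding wt_def by (simp add: card_image cong: conj_cong)
  then show ?thesis
    unfolding img wt_def .
qed

section \<open>Polynomials and linear systems\<close>

lemma card_le_degree_if_roots:
  fixes p :: "'a::idom poly"
  assumes "p \<noteq> 0" "inj_on f K" "\<And>k. k \<in> K \<Longrightarrow> poly p (f k) = 0"
  shows "card K \<le> degree p"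
proof -
  have "card K = card (f ` K)"
    using assms(2) by (simp add: card_image)
  also have "\<dots> \<le> card {x. poly p x = 0}"
    using assms(3) poly_roots_finite[OF assms(1)] by (intro card_mono) auto
  also have "\<dots> \<le> degree p"
    by (rule card_poly_roots_bound[OF assms(1)])
  finally show ?thesis .
qed

lemma coeff_sum_monom:
  "finite T \<Longrightarrow> coeff (\<Sum>j\<in>T. monom (u j) j) i = (if i \<in> T then u i else 0)"
  by (simp add: coeff_sum coeff_monom)

lemma degree_sum_monom_le:
  "(\<And>j. j \<in> T \<Longrightarrow> j \<le> d) \<Longrightarrow> degree (\<Sum>j\<in>T. monom (u j) j) \<le> d"
  by (induct T rule: infinite_finite_induct)
    (auto intro: degree_add_le order.trans[OF degree_monom_le])

lemma exists_nontrivial_solution: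
  fixes \<phi> :: "nat \<Rightarrow> nat \<Rightarrow> 'a::field"
  assumes G: "finite G" "card G < N"
  shows "\<exists>x. (\<exists>i<N. x i \<noteq> 0) \<and> (\<forall>j\<in>G. (\<Sum>i<N. \<phi> j i * x i) = 0)"
proof -
  define col where "col i = (\<lambda>j. if j \<in> G then \<phi> j i else 0)" for i
  show ?thesis
  proof (cases "inj_on col {..<N}")
    case False
    then obtain i i' where i: "i < N" "i' < N" "i \<noteq> i'" "col i = col i'"
      by (auto simp: inj_on_def)
    define x where "x k = (if k = i then 1 else 0) - (if k = i' then 1 else 0 :: 'a)" for k :: nat
    have "(\<Sum>k<N. \<phi> j k * x k)
        = (\<Sum>k<N. if k = i then \<phi> j k else 0) - (\<Sum>k<N. if k = i' then \<phi> j k else 0)" for j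
      unfolding sum_subtractf[symmetric] by (rule sum.cong) (auto simp: x_def)
    then have "(\<Sum>k<N. \<phi> j k * x k) = \<phi> j i - \<phi> j i'" for j
      using i by simp
    moreover have "\<phi> j i = \<phi> j i'" if "j \<in> G" for j
      using fun_cong[OF i(4), of j] that by (simp add: col_def)
    ultimately show ?thesis
      using i by (intro exI[of _ x]) (auto simp: x_def)
  next
    case True
    have "vs.dependent (col ` {..<N})"
    proof (rule ccontr)
      assume "vs.independent (col ` {..<N})"
      then have "card (col ` {..<N}) \<le> card G"
        by (rule card_independent_supported_le[OF G(1)]) (auto simp: col_def)
      with G(2) True show False
        by (simp add: card_image)
    qed
    then obtain u where u: "\<exists>v\<in>col ` {..<N}. u v \<noteq> 0" "(\<Sum>v\<in>col ` {..<N}. smul (u v) v) = 0"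
      unfolding vs.dependent_finite[OF finite_imageI[OF finite_lessThan]] by blast
    have "(\<Sum>i<N. smul (u (col i)) (col i)) = 0"
      using u(2) by (simp add: sum.reindex[OF True])
    then have "(\<Sum>i<N. \<phi> j i * u (col i)) = 0" if "j \<in> G" for j
      using that by (auto simp: fun_eq_iff sum_fun_apply smul_def col_def mult.commute dest: spec[of _ j])
    with u(1) show ?thesis
      by (intro exI[of _ "\<lambda>i. u (col i)"]) auto
  qed
qed

lemma exists_poly_vanishing_with_zero_coeffs:
  fixes Z :: "'a::field set"
  assumes "finite Z" "finite G" "card G < N"
  shows "\<exists>h. h \<noteq> 0 \<and> degree h < N + card Z \<and> (\<forall>z\<in>Z. poly h z = 0) \<and> (\<forall>j\<in>G. coeff h j = 0)"
proof -
  define P where "P = (\<Prod>z\<in>Z. [:- z, 1:])"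
  have "P \<noteq> 0"
    using assms(1) by (simp add: P_def)
  have deg_P: "degree P = card Z"
    unfolding P_def by (subst degree_prod_eq_sum_degree) auto
  \<comment> \<open>the coefficients of \<open>q * P\<close> at \<open>G\<close> are \<open>card G < N\<close> linear forms in those of \<open>q\<close>\<close>
  obtain x where x: "\<exists>i<N. x i \<noteq> 0" "\<forall>j\<in>G. (\<Sum>i<N. coeff (monom 1 i * P) j * x i) = 0"
    using exists_nontrivial_solution[OF assms(2,3), where \<phi> = "\<lambda>j i. coeff (monom 1 i * P) j"]
    by blast
  define q where "q = (\<Sum>i<N. monom (x i) i)"
  have "q \<noteq> 0"
    using x(1) by (auto simp: q_def poly_eq_iff coeff_sum_monom)
  have "degree q \<le> N - 1"
    unfolding q_def by (rule degree_sum_monom_le) auto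
  have coeff_qP: "coeff (q * P) j = (\<Sum>i<N. coeff (monom 1 i * P) j * x i)" for j
  proof -
    have "q * P = (\<Sum>i<N. smult (x i) (monom 1 i * P))"
      by (simp add: q_def sum_distrib_right smult_monom flip: mult_smult_left)
    then show ?thesis
      by (simp add: coeff_sum mult.commute)
  qed
  show ?thesis
  proof (intro exI conjI ballI)
    show "q * P \<noteq> 0"
      using \<open>q \<noteq> 0\<close> \<open>P \<noteq> 0\<close> by simp
    show "degree (q * P) < N + card Z"
      using \<open>q \<noteq> 0\<close> \<open>P \<noteq> 0\<close> \<open>degree q \<le> N - 1\<close> deg_P assms(3)
      by (simp add: degree_mult_eq)
    show "poly (q * P) z = 0" if "z \<in> Z" for z
      using that assms(1) by (simp add: P_def poly_prod)
    show "coeff (q * P) j = 0" if "j \<in> G" for j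
      using x(2) that by (simp add: coeff_qP)
  qed
qed

section \<open>Index sets modulo \<open>n\<close>\<close>

lemma inj_on_mod_atLeastAtMost:
  fixes n :: nat
  shows "S \<subseteq> {1..n} \<Longrightarrow> inj_on (\<lambda>s. s mod n) S"
proof (rule inj_onI)
  fix x y assume S: "S \<subseteq> {1..n}" and xy: "x \<in> S" "y \<in> S" "x mod n = y mod n"
  have "s mod n = (if s = n then 0 else s)" if "s \<in> S" for s
    using S that by auto
  with S xy show "x = y"
    by (auto split: if_splits)
qed

lemma card_smult_mod:
  assumes "coprime a n" "S \<subseteq> {1..n}"
  shows "card (smult_mod n a S) = card S"
proof -
  have "inj_on (\<lambda>s. a * s mod n) S"
  proof (rule inj_onI)
    fix x y assume "x \<in> S" "y \<in> S" "a * x mod n = a * y mod n"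
    moreover from this have "x mod n = y mod n"
      using cong_mult_lcancel_nat[OF assms(1)] by (simp add: cong_def)
    ultimately show "x = y"
      using inj_on_mod_atLeastAtMost[OF assms(2)] by (auto dest: inj_onD)
  qed
  then show ?thesis
    unfolding smult_mod_def by (rule card_image)
qed

lemma smult_mod_subset: "0 < n \<Longrightarrow> smult_mod n a S \<subseteq> {..<n}"
  unfolding smult_mod_def by auto

lemma cyc_interval_subset: "0 < n \<Longrightarrow> cyc_interval n s L \<subseteq> {..<n}"
  unfolding cyc_interval_def by auto

lemma cyc_interval_full:
  assumes "0 < n" "n \<le> L"
  shows "cyc_interval n s L = {..<n}"
proof
  show "{..<n} \<subseteq> cyc_interval n s L"
  proof
    fix x assume "x \<in> {..<n}"
    define j where "j = (x + (n - s mod n)) mod n"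
    have "(s + j) mod n = (s mod n + (x + (n - s mod n))) mod n"
      by (simp add: j_def mod_add_right_eq mod_add_left_eq)
    also have "\<dots> = (x + n) mod n"
      using mod_less_divisor[OF assms(1), of s] by (simp add: less_imp_le)
    also have "\<dots> = x"
      using \<open>x \<in> {..<n}\<close> by simp
    finally have "(s + j) mod n = x" .
    moreover have "j < L"
      unfolding j_def using mod_less_divisor[OF assms(1)] assms(2) by (rule order_less_le_trans)
    ultimately show "x \<in> cyc_interval n s L"
      unfolding cyc_interval_def by blast
  qed
qed (rule cyc_interval_subset[OF assms(1)])

lemma card_cyc_interval:
  assumes "L \<le> n"
  shows "card (cyc_interval n s L) = L"
proof -
  have "inj_on (\<lambda>j. (s + j) mod n) {..<L}"
  proof (rule inj_onI)
    fix x y assume "x \<in> {..<L}" "y \<in> {..<L}" "(s + x) mod n = (s + y) mod n"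
    moreover from this have "[x = y] (mod n)"
      by (simp add: cong_add_lcancel_nat flip: cong_def)
    ultimately show "x = y"
      using assms by (simp add: cong_def)
  qed
  moreover have "cyc_interval n s L = (\<lambda>j. (s + j) mod n) ` {..<L}"
    unfolding cyc_interval_def by auto
  ultimately show ?thesis
    by (simp add: card_image)
qed

lemma closure_card_attained:
  assumes "0 < n"
  obtains L s0 where "L \<le> n" "closure_card n S = L" "(\<lambda>x. x mod n) ` S \<subseteq> cyc_interval n s0 L"
proof -
  define Q where "Q = {card (cyc_interval n s L) | s L. (\<lambda>x. x mod n) ` S \<subseteq> cyc_interval n s L}"
  have "(\<lambda>x. x mod n) ` S \<subseteq> cyc_interval n 0 n"
    using cyc_interval_full[OF assms order.refl] assms by auto
  then have "card (cyc_interval n 0 n) \<in> Q"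
    unfolding Q_def by blast
  moreover have "Q \<subseteq> {..n}"
  proof
    fix q assume "q \<in> Q"
    then obtain s L where "q = card (cyc_interval n s L)"
      unfolding Q_def by blast
    then show "q \<in> {..n}"
      using card_mono[OF _ cyc_interval_subset[OF assms], of s L] by simp
  qed
  ultimately have "Min Q \<in> Q"
    using finite_subset by (intro Min_in) auto
  then obtain s0 L' where sub: "(\<lambda>x. x mod n) ` S \<subseteq> cyc_interval n s0 L'"
    and min: "closure_card n S = card (cyc_interval n s0 L')"
    unfolding Q_def closure_card_def by auto
  have same: "cyc_interval n s0 L' = cyc_interval n s0 (min L' n)"
    using cyc_interval_full[OF assms] by (cases "L' \<le> n") auto
  show ?thesis
  proof (rule that)
    show "min L' n \<le> n"
      by simp
    show "closure_card n S = min L' n"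
      using min same card_cyc_interval[of "min L' n" n s0] by simp
    show "(\<lambda>x. x mod n) ` S \<subseteq> cyc_interval n s0 (min L' n)"
      using sub same by simp
  qed
qed

lemma closure_card_interval:
  assumes "0 < n" "S \<subseteq> {1..n}"
  obtains L js s0 where "L \<le> n" "closure_card n S = L"
    "\<And>s. s \<in> S \<Longrightarrow> js s < L" "\<And>s. s \<in> S \<Longrightarrow> s mod n = (s0 + js s) mod n"
    "inj_on js S"
proof -
  obtain L s0 where L: "L \<le> n" "closure_card n S = L"
    and sub: "(\<lambda>x. x mod n) ` S \<subseteq> cyc_interval n s0 L"
    by (rule closure_card_attained[OF assms(1)])
  have "\<forall>s\<in>S. \<exists>j. j < L \<and> s mod n = (s0 + j) mod n"
    using sub unfolding cyc_interval_def by (auto dest!: subsetD[OF _ imageI])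
  from bchoice[OF this] obtain js where js: "\<forall>s\<in>S. js s < L \<and> s mod n = (s0 + js s) mod n"
    by blast
  show ?thesis
  proof (rule that[OF L])
    show "js s < L" "s mod n = (s0 + js s) mod n" if "s \<in> S" for s
      using js that by auto
    show "inj_on js S"
    proof (rule inj_onI)
      fix x y assume "x \<in> S" "y \<in> S" "js x = js y"
      with js have "x mod n = y mod n"
        by metis
      with \<open>x \<in> S\<close> \<open>y \<in> S\<close> show "x = y"
        using inj_on_mod_atLeastAtMost[OF assms(2)] by (auto dest: inj_onD)
    qed
  qed
qed

section \<open>Codes defined by a primitive root of unity\<close>

locale primitive_root =
  fixes n :: nat and g :: "'a::field"
  assumes n_pos: "n \<ge> 1"
    and power_n: "g ^ n = 1"
    and power_ne_1: "\<And>m. 0 < m \<Longrightarrow> m < n \<Longrightarrow> g ^ m \<noteq> 1"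
begin

lemma power_exp_mod: "g ^ (e mod n) = g ^ e"
proof -
  have "g ^ e = g ^ (n * (e div n) + e mod n)"
    by simp
  also have "\<dots> = (g ^ n) ^ (e div n) * g ^ (e mod n)"
    by (simp only: power_add power_mult)
  finally have "g ^ e = (g ^ n) ^ (e div n) * g ^ (e mod n)" .
  then show ?thesis
    by (simp add: power_n)
qed

lemma power_exp_cong: "e mod n = e' mod n \<Longrightarrow> g ^ e = g ^ e'"
  by (metis power_exp_mod)

lemma root_nonzero: "g \<noteq> 0"
  using power_n n_pos by (cases n) auto

lemma power_eq_1_iff_dvd: "g ^ m = 1 \<longleftrightarrow> n dvd m"
proof
  assume "g ^ m = 1"
  then have "g ^ (m mod n) = 1"
    by (simp add: power_exp_mod)
  with power_ne_1[of "m mod n"] n_pos show "n dvd m"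
    by (meson mod_greater_zero_iff_not_dvd mod_less_divisor not_less_iff_gr_or_eq zero_less_one
        order_less_le_trans)
next
  assume "n dvd m"
  then show "g ^ m = 1"
    by (auto simp: power_mult power_n)
qed

lemma inj_on_power:
  assumes "coprime e n"
  shows "inj_on (\<lambda>k. (g ^ e) ^ k) {..<n}"
proof -
  have "k = k'" if "k < n" "k' < n" "k \<le> k'" "(g ^ e) ^ k = (g ^ e) ^ k'" for k k'
  proof -
    have "g ^ (e * k') = g ^ (e * k) * g ^ (e * (k' - k))"
      using that(3) by (simp flip: power_add add: diff_mult_distrib2)
    with that(4) have "g ^ (e * (k' - k)) = 1"
      using root_nonzero by (simp add: power_mult)
    then have "n dvd k' - k"
      using assms by (simp add: power_eq_1_iff_dvd coprime_commute coprime_dvd_mult_right_iff)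
    with that show ?thesis
      by (metis diff_is_0_eq dvd_imp_le le_antisym less_imp_diff_less not_le zero_less_diff)
  qed
  then show ?thesis
    unfolding inj_on_def by (metis lessThan_iff nat_le_linear)
qed

lemma dT_le_wt_multiplier:
  assumes "coprime e n" "v \<in> Fn n" "v \<noteq> 0"
    and orth: "\<And>t. t \<in> T \<Longrightarrow> (\<Sum>k<n. g ^ (t * e * k) * v k) = 0"
  shows "dT n g T \<le> wt n v"
proof -
  define \<pi> where "\<pi> k = e * k mod n" for k
  have \<pi>: "bij_betw \<pi> {..<n} {..<n}"
    unfolding \<pi>_def using assms(1) by (rule bij_betw_mult_mod)
  define \<rho> where "\<rho> = inv_into {..<n} \<pi>"
  have \<rho>: "bij_betw \<rho> {..<n} {..<n}"
    unfolding \<rho>_def using \<pi> by (rule bij_betw_inv_into)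
  define w where "w j = (if j < n then v (\<rho> j) else 0)" for j
  have wt_w: "wt n w = wt n v"
    unfolding w_def by (rule wt_reindex[OF \<rho>])
  have "w \<in> ker_code n g T"
    unfolding ker_code_def
  proof safe
    show "w \<in> Fn n"
      by (simp add: w_def Fn_def)
    fix t assume "t \<in> T"
    have "(\<Sum>j<n. g ^ (t * j) * w j) = (\<Sum>j<n. g ^ (t * j) * v (\<rho> j))"
      by (simp add: w_def)
    also have "\<dots> = (\<Sum>k<n. g ^ (t * \<pi> k) * v (\<rho> (\<pi> k)))"
      by (rule sum.reindex_bij_betw[OF \<pi>, symmetric])
    also have "\<dots> = (\<Sum>k<n. g ^ (t * e * k) * v k)"
    proof (rule sum.cong)
      fix k assume "k \<in> {..<n}"
      moreover have "g ^ (t * \<pi> k) = g ^ (t * e * k)"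
        by (rule power_exp_cong) (simp add: \<pi>_def mod_mult_right_eq mult.assoc)
      ultimately show "g ^ (t * \<pi> k) * v (\<rho> (\<pi> k)) = g ^ (t * e * k) * v k"
        using \<pi> by (simp add: \<rho>_def bij_betw_inv_into_left)
    qed simp
    finally show "(\<Sum>k<n. g ^ (t * k) * w k) = 0"
      using orth[OF \<open>t \<in> T\<close>] by simp
  qed
  moreover have "w \<noteq> 0"
    using wt_w wt_pos[OF assms(2,3)] by (metis less_irrefl wt_zero)
  ultimately show ?thesis
    unfolding dT_def wt_w[symmetric] by (rule mindist_le_wt)
qed

lemma inj_on_vrow: "inj_on (vrow n g) {..<n}"
proof (cases "n = 1")
  case False
  then have "1 < n"
    using n_pos by simp
  show ?thesis
  proof (rule inj_onI)
    fix i j assume ij: "i \<in> {..<n}" "j \<in> {..<n}" and eq: "vrow n g i = vrow n g j"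
    have "(g ^ 1) ^ i = (g ^ 1) ^ j"
      using fun_cong[OF eq, of 1] \<open>1 < n\<close> by (simp add: vrow_def)
    then show "i = j"
      using inj_on_power[of 1] ij by (auto dest: inj_onD)
  qed
qed (auto simp: inj_on_def)

lemma independent_vrow:
  assumes "T \<subseteq> {..<n}"
  shows "vs.independent (vrow n g ` T)"
proof
  have T: "finite T"
    using assms finite_subset by blast
  have inj: "inj_on (vrow n g) T"
    using inj_on_subset[OF inj_on_vrow assms] .
  assume "vs.dependent (vrow n g ` T)"
  then obtain u where u: "\<exists>v\<in>vrow n g ` T. u v \<noteq> 0" "(\<Sum>v\<in>vrow n g ` T. smul (u v) v) = 0"
    unfolding vs.dependent_finite[OF finite_imageI[OF T]] by blast
  define p where "p = (\<Sum>i\<in>T. monom (u (vrow n g i)) i)"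
  have "p \<noteq> 0"
    using u(1) T by (auto simp: p_def poly_eq_iff coeff_sum_monom)
  have sum0: "(\<Sum>i\<in>T. smul (u (vrow n g i)) (vrow n g i)) = 0"
    using u(2) by (simp add: sum.reindex[OF inj])
  have "poly p (g ^ k) = 0" if "k < n" for k
  proof -
    have "poly p (g ^ k) = (\<Sum>i\<in>T. smul (u (vrow n g i)) (vrow n g i)) k"
      using that by (simp add: p_def poly_sum poly_monom sum_fun_apply smul_def vrow_def ac_simps
          flip: power_mult)
    then show ?thesis
      by (simp add: sum0)
  qed
  moreover have "inj_on (\<lambda>k. g ^ k) {..<n}"
    using inj_on_power[of 1] by simp
  ultimately have "card {..<n} \<le> degree p"
    by (intro card_le_degree_if_roots[OF \<open>p \<noteq> 0\<close>]) auto
  moreover have "degree p \<le> n - 1"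
    unfolding p_def using assms by (intro degree_sum_monom_le) auto
  ultimately show False
    using n_pos by simp
qed

lemma cdim_gen_code:
  assumes "T \<subseteq> {..<n}"
  shows "cdim (gen_code n g T) = card T"
proof -
  have "cdim (gen_code n g T) = card (vrow n g ` T)"
    unfolding cdim_def gen_code_def lspan_eq_span
    by (rule vs.dim_span_eq_card_independent[OF independent_vrow[OF assms]])
  also have "\<dots> = card T"
    using inj_on_subset[OF inj_on_vrow assms] by (rule card_image)
  finally show ?thesis .
qed

lemma cdim_gen_code_smult_mod:
  assumes "coprime a n" "S \<subseteq> {1..n}"
  shows "cdim (gen_code n g (smult_mod n a S)) = card S"
  using cdim_gen_code[OF smult_mod_subset] card_smult_mod[OF assms] n_pos by simp

lemma ker_code_sumset_orth:
  assumes "c \<in> ker_code n g (sumset_mod n T1 T2)" "i \<in> T1" "j \<in> T2"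
  shows "(\<Sum>k<n. g ^ ((i + j) * k) * c k) = 0"
proof -
  have "(i + j) mod n \<in> sumset_mod n T1 T2"
    unfolding sumset_mod_def using assms(2,3) by blast
  with assms(1) have "(\<Sum>k<n. g ^ ((i + j) mod n * k) * c k) = 0"
    by (simp add: ker_code_def)
  moreover have "g ^ ((i + j) mod n * k) = g ^ ((i + j) * k)" for k
    by (rule power_exp_cong) (simp add: mod_mult_left_eq)
  ultimately show ?thesis
    by simp
qed

lemma starprod_gen_code_subset_dual:
  "starprod (gen_code n g T1) (gen_code n g T2) \<subseteq> dual n (ker_code n g (sumset_mod n T1 T2))"
  unfolding gen_code_def
proof (rule starprod_lspan_subset[OF subspace_dual], safe)
  fix i j assume "i \<in> T1" "j \<in> T2"
  have "ip n c (vmul (vrow n g i) (vrow n g j)) = 0"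
    if "c \<in> ker_code n g (sumset_mod n T1 T2)" for c
  proof -
    have "ip n c (vmul (vrow n g i) (vrow n g j)) = (\<Sum>k<n. g ^ ((i + j) * k) * c k)"
      unfolding ip_def vmul_def vrow_def by (simp add: algebra_simps power_add)
    then show ?thesis
      using ker_code_sumset_orth[OF that \<open>i \<in> T1\<close> \<open>j \<in> T2\<close>] by simp
  qed
  then show "vmul (vrow n g i) (vrow n g j) \<in> dual n (ker_code n g (sumset_mod n T1 T2))"
    by (simp add: dual_def Fn_def vmul_def vrow_def)
qed

lemma dT_le_mindist_dual_gen_code:
  assumes "coprime a n"
  shows "dT n g S \<le> mindist n (dual n (gen_code n g (smult_mod n a S)))"
proof (rule le_mindistI)
  fix c assume c: "c \<in> dual n (gen_code n g (smult_mod n a S))" "c \<noteq> 0"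
  show "dT n g S \<le> wt n c"
  proof (rule dT_le_wt_multiplier[OF assms _ c(2)])
    show "c \<in> Fn n"
      using c(1) by (simp add: dual_def)
    fix s assume "s \<in> S"
    then have "vrow n g (a * s mod n) \<in> gen_code n g (smult_mod n a S)"
      unfolding gen_code_def lspan_eq_span smult_mod_def by (auto intro: vs.span_base)
    with c(1) have "ip n (vrow n g (a * s mod n)) c = 0"
      by (simp add: dual_def)
    then have "(\<Sum>k<n. g ^ (a * s mod n * k) * c k) = 0"
      by (simp add: ip_def vrow_def)
    moreover have "g ^ (a * s mod n * k) = g ^ (s * a * k)" for k
      by (rule power_exp_cong) (simp add: mod_mult_left_eq mult.commute[of s a])
    ultimately show "(\<Sum>k<n. g ^ (s * a * k) * c k) = 0"
      by simp
  qed
qed (unfold dT_def, rule mindist_le_Suc)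

end

section \<open>Generating sets inside a cyclic interval\<close>

locale interval_representation = primitive_root +
  fixes a :: nat and S :: "nat set" and s0 L :: nat and js :: "nat \<Rightarrow> nat"
  assumes coprime_a: "coprime a n"
    and finite_S: "finite S"
    and L_le: "L \<le> n"
    and js_less: "\<And>s. s \<in> S \<Longrightarrow> js s < L"
    and js_mod: "\<And>s. s \<in> S \<Longrightarrow> s mod n = (s0 + js s) mod n"
    and inj_js: "inj_on js S"
begin

definition twisted :: "'a poly \<Rightarrow> (nat \<Rightarrow> 'a) \<Rightarrow> nat \<Rightarrow> 'a" where
  "twisted h c k = (if k < n then (g ^ a) ^ (s0 * k) * poly h ((g ^ a) ^ k) * c k else 0)"

lemma card_S_le: "card S \<le> L"
  using card_inj_on_le[OF inj_js, of "{..<L}"] js_less by auto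

lemma power_row_split:
  assumes "s \<in> S"
  shows "g ^ (a * s * k) = (g ^ a) ^ (s0 * k) * ((g ^ a) ^ k) ^ js s"
proof -
  have "(g ^ a) ^ (s0 * k) * ((g ^ a) ^ k) ^ js s = g ^ (a * (s0 + js s) * k)"
    by (simp add: algebra_simps flip: power_mult power_add)
  also have "\<dots> = g ^ (a * s * k)"
  proof (rule power_exp_cong)
    have "[s0 + js s = s] (mod n)"
      using js_mod[OF assms] by (simp add: cong_def)
    then show "a * (s0 + js s) * k mod n = a * s * k mod n"
      unfolding cong_def[symmetric] by (intro cong_mult cong_refl)
  qed
  finally show ?thesis
    by simp
qed

lemma twisted_nonzero_iff:
  "twisted h c k \<noteq> 0 \<longleftrightarrow> k < n \<and> c k \<noteq> 0 \<and> poly h ((g ^ a) ^ k) \<noteq> 0"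
  using root_nonzero by (auto simp: twisted_def)

lemma twisted_in_Fn: "twisted h c \<in> Fn n"
  by (simp add: twisted_def Fn_def)

lemma twisted_eq_sum:
  assumes supp: "\<And>j. coeff h j \<noteq> 0 \<Longrightarrow> j \<in> js ` S" and "k < n"
  shows "twisted h c k = (\<Sum>s\<in>S. coeff h (js s) * g ^ (a * s * k)) * c k"
proof -
  have "poly h y = (\<Sum>j\<in>js ` S. coeff h j * y ^ j)" for y
    unfolding poly_altdef using supp
    by (intro sum.mono_neutral_cong) (auto simp: finite_S coeff_eq_0 not_le)
  also have "\<dots> y = (\<Sum>s\<in>S. coeff h (js s) * y ^ js s)" for y
    by (simp add: sum.reindex[OF inj_js])
  finally have "twisted h c k
      = (\<Sum>s\<in>S. coeff h (js s) * ((g ^ a) ^ (s0 * k) * ((g ^ a) ^ k) ^ js s)) * c k"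
    using \<open>k < n\<close> by (simp add: twisted_def sum_distrib_left ac_simps)
  also have "\<dots> = (\<Sum>s\<in>S. coeff h (js s) * g ^ (a * s * k)) * c k"
    by (intro arg_cong[where f = "\<lambda>x. x * c k"] sum.cong refl) (simp add: power_row_split)
  finally show ?thesis .
qed

lemma gen_code_twisted:
  assumes "x \<in> gen_code n g (smult_mod n a S)"
  shows "\<exists>p. (\<forall>j. coeff p j \<noteq> 0 \<longrightarrow> j \<in> js ` S) \<and> x = twisted p 1"
proof -
  have "gen_code n g (smult_mod n a S) = lspan ((\<lambda>s. vrow n g (a * s mod n)) ` S)"
    unfolding gen_code_def smult_mod_def by (simp add: image_comp o_def)
  then obtain u where u: "x = (\<lambda>k. \<Sum>s\<in>S. u s * vrow n g (a * s mod n) k)"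
    using lspan_image_coeffs[OF finite_S] assms by metis
  define p where "p = (\<Sum>s\<in>S. monom (u s) (js s))"
  have supp: "j \<in> js ` S" if "coeff p j \<noteq> 0" for j
    using that by (auto simp: p_def coeff_sum coeff_monom intro!: sum.neutral)
  have coeff_p: "coeff p (js s) = u s" if "s \<in> S" for s
  proof -
    have "coeff p (js s) = (\<Sum>s'\<in>S. if s' = s then u s' else 0)"
      unfolding p_def coeff_sum coeff_monom using inj_js that
      by (intro sum.cong) (auto dest: inj_onD)
    then show ?thesis
      using that finite_S by simp
  qed
  have "x = twisted p 1"
  proof
    fix k
    show "x k = twisted p 1 k"
    proof (cases "k < n")
      case True
      have "g ^ (a * s mod n * k) = g ^ (a * s * k)" for s
        by (rule power_exp_cong) (simp add: mod_mult_left_eq)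
      with True show ?thesis
        by (simp add: u vrow_def twisted_eq_sum[OF supp] coeff_p cong: sum.cong)
    qed (simp add: u twisted_def vrow_def)
  qed
  with supp show ?thesis
    by blast
qed

lemma wt_gen_code_gt:
  assumes "x \<in> gen_code n g (smult_mod n a S)" "x \<noteq> 0"
  shows "n < wt n x + L"
proof -
  obtain p where supp: "\<And>j. coeff p j \<noteq> 0 \<Longrightarrow> j \<in> js ` S" and x: "x = twisted p 1"
    using gen_code_twisted[OF assms(1)] by blast
  have "p \<noteq> 0"
  proof
    assume "p = 0"
    then have "x = 0"
      by (simp add: x twisted_def fun_eq_iff)
    with assms(2) show False
      by contradiction
  qed
  then have "coeff p (degree p) \<noteq> 0"
    by simp
  then obtain s where "s \<in> S" "degree p = js s"
    using supp by blast
  then have "degree p < L"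
    using js_less by simp
  have "card {k. k < n \<and> x k = 0} \<le> degree p"
  proof (rule card_le_degree_if_roots[OF \<open>p \<noteq> 0\<close>])
    show "inj_on (\<lambda>k. (g ^ a) ^ k) {k. k < n \<and> x k = 0}"
      by (rule inj_on_subset[OF inj_on_power[OF coprime_a]]) auto
    show "poly p ((g ^ a) ^ k) = 0" if "k \<in> {k. k < n \<and> x k = 0}" for k
      using that twisted_nonzero_iff[of p 1 k] by (simp add: x)
  qed
  with \<open>degree p < L\<close> show ?thesis
    using wt_add_card_zeros[of n x] by linarith
qed

lemma mindist_gen_code: "n < mindist n (gen_code n g (smult_mod n a S)) + L"
proof -
  have "n + 1 - L \<le> mindist n (gen_code n g (smult_mod n a S))"
    using wt_gen_code_gt by (intro le_mindistI) force+
  with L_le show ?thesis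
    by linarith
qed

lemma twisted_orthogonal:
  assumes c: "c \<in> ker_code n g (sumset_mod n (smult_mod n a S) (smult_mod n b R))"
    and supp: "\<And>j. coeff h j \<noteq> 0 \<Longrightarrow> j \<in> js ` S" and "r \<in> R"
  shows "(\<Sum>k<n. g ^ (r * b * k) * twisted h c k) = 0"
proof -
  have orth: "(\<Sum>k<n. g ^ (a * s * k) * (g ^ (r * b * k) * c k)) = 0" if "s \<in> S" for s
  proof -
    have "(\<Sum>k<n. g ^ ((a * s mod n + b * r mod n) * k) * c k) = 0"
      using ker_code_sumset_orth[OF c] that \<open>r \<in> R\<close> by (auto simp: smult_mod_def)
    moreover have "g ^ ((a * s mod n + b * r mod n) * k) = g ^ (a * s * k) * g ^ (r * b * k)" for k
    proof -
      have "[(a * s mod n + b * r mod n) * k = (a * s + r * b) * k] (mod n)"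
        by (intro cong_mult cong_add cong_refl) (simp_all add: cong_def mult.commute[of b r])
      then have "g ^ ((a * s mod n + b * r mod n) * k) = g ^ ((a * s + r * b) * k)"
        unfolding cong_def by (rule power_exp_cong)
      then show ?thesis
        by (simp add: add_mult_distrib power_add)
    qed
    ultimately show ?thesis
      by (simp add: mult.assoc)
  qed
  have "(\<Sum>k<n. g ^ (r * b * k) * twisted h c k)
      = (\<Sum>k<n. \<Sum>s\<in>S. coeff h (js s) * (g ^ (a * s * k) * (g ^ (r * b * k) * c k)))"
    by (intro sum.cong refl) (simp add: twisted_eq_sum[OF supp] sum_distrib_left sum_distrib_right ac_simps)
  also have "\<dots> = (\<Sum>s\<in>S. coeff h (js s) * (\<Sum>k<n. g ^ (a * s * k) * (g ^ (r * b * k) * c k)))"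
    by (subst sum.swap) (simp add: sum_distrib_left)
  also have "\<dots> = 0"
    using orth by simp
  finally show ?thesis .
qed

lemma dT_le_wt_twisted:
  assumes "coprime b n"
    and "c \<in> ker_code n g (sumset_mod n (smult_mod n a S) (smult_mod n b R))"
    and "\<And>j. coeff h j \<noteq> 0 \<Longrightarrow> j \<in> js ` S" and "twisted h c \<noteq> 0"
  shows "dT n g R \<le> wt n (twisted h c)"
  using assms by (intro dT_le_wt_multiplier twisted_in_Fn twisted_orthogonal)

lemma exists_supported_poly_vanishing:
  assumes Z: "Z \<subseteq> {..<n}" and "L + 2 \<le> card S + d" "d + card Z \<le> L + 1"
  shows "\<exists>h. h \<noteq> 0 \<and> (\<forall>j. coeff h j \<noteq> 0 \<longrightarrow> j \<in> js ` S) \<and> degree h < d - 1 + card Z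
    \<and> (\<forall>k\<in>Z. poly h ((g ^ a) ^ k) = 0)"
proof -
  define G where "G = {..<L} - js ` S"
  have "card G = L - card S"
    unfolding G_def using js_less card_image[OF inj_js]
    by (subst card_Diff_subset) (auto simp: finite_S)
  then have card_G: "card G < d - 1"
    using assms(2) card_S_le by linarith
  moreover have "finite G"
    by (simp add: G_def)
  moreover have "finite Z"
    using Z finite_subset by blast
  ultimately obtain h where h: "h \<noteq> 0" "degree h < d - 1 + card ((\<lambda>k. (g ^ a) ^ k) ` Z)"
    "\<forall>z\<in>(\<lambda>k. (g ^ a) ^ k) ` Z. poly h z = 0" "\<forall>j\<in>G. coeff h j = 0"
    using exists_poly_vanishing_with_zero_coeffs[of "(\<lambda>k. (g ^ a) ^ k) ` Z" G "d - 1"] by blast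
  have "card ((\<lambda>k. (g ^ a) ^ k) ` Z) = card Z"
    using inj_on_subset[OF inj_on_power[OF coprime_a] Z] by (rule card_image)
  with h(2) have "degree h < d - 1 + card Z"
    by simp
  moreover have "j \<in> js ` S" if "coeff h j \<noteq> 0" for j
  proof -
    have "j < L"
      using le_degree[OF that] \<open>degree h < d - 1 + card Z\<close> assms(3) card_G by linarith
    moreover have "j \<notin> G"
      using h(4) that by blast
    ultimately show ?thesis
      by (simp add: G_def)
  qed
  ultimately show ?thesis
    using h(1,3) by blast
qed

lemma exists_light_twist_of_heavy:
  assumes "d \<le> wt n c" "wt n c \<le> L" "L + 2 \<le> card S + d"
  shows "\<exists>h. (\<forall>j. coeff h j \<noteq> 0 \<longrightarrow> j \<in> js ` S) \<and> twisted h c \<noteq> 0 \<and> wt n (twisted h c) < d"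
proof -
  define W where "W = {k. k < n \<and> c k \<noteq> 0}"
  have W: "finite W" "card W = wt n c" "W \<subseteq> {..<n}"
    unfolding W_def wt_def by auto
  have "2 \<le> d"
    using assms card_S_le by linarith
  have "wt n c + 1 - d \<le> card W"
    using W(2) \<open>2 \<le> d\<close> by simp
  then obtain Z where Z: "Z \<subseteq> W" "card Z = wt n c + 1 - d" "finite Z"
    by (rule obtain_subset_with_card_n)
  then obtain h where supp: "\<forall>j. coeff h j \<noteq> 0 \<longrightarrow> j \<in> js ` S" and h: "h \<noteq> 0"
    "degree h < d - 1 + card Z" "\<forall>k\<in>Z. poly h ((g ^ a) ^ k) = 0"
    using exists_supported_poly_vanishing[of Z d] W(3) assms by auto
  have "degree h < card W"
    using h(2) Z(2) W(2) assms(1) \<open>2 \<le> d\<close> by linarith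
  then obtain k where "k \<in> W" "poly h ((g ^ a) ^ k) \<noteq> 0"
    using card_le_degree_if_roots[OF h(1) inj_on_subset[OF inj_on_power[OF coprime_a] W(3)]]
    by force
  then have "twisted h c k \<noteq> 0"
    using twisted_nonzero_iff by (simp add: W_def)
  then have "twisted h c \<noteq> 0"
    by (metis zero_fun_apply)
  moreover have "wt n (twisted h c) \<le> card (W - Z)"
    unfolding wt_def using twisted_nonzero_iff h(3) W(1)
    by (intro card_mono) (auto simp: W_def)
  moreover have "card (W - Z) = d - 1"
    using card_Diff_subset[OF Z(3,1)] W(2) Z(2) assms(1) \<open>2 \<le> d\<close> by simp
  ultimately show ?thesis
    using supp \<open>2 \<le> d\<close> by (intro exI[of _ h]) auto
qed

lemma exists_light_twist:
  assumes "c \<in> Fn n" "c \<noteq> 0" "S \<noteq> {}" "wt n c \<le> L" "L + 2 \<le> card S + d"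
  shows "\<exists>h. (\<forall>j. coeff h j \<noteq> 0 \<longrightarrow> j \<in> js ` S) \<and> twisted h c \<noteq> 0 \<and> wt n (twisted h c) < d"
proof (cases "wt n c < d")
  case True
  obtain s where "s \<in> S"
    using assms(3) by blast
  have "twisted (monom 1 (js s)) c k \<noteq> 0 \<longleftrightarrow> k < n \<and> c k \<noteq> 0" for k
    using twisted_nonzero_iff root_nonzero by (simp add: poly_monom)
  then have "wt n (twisted (monom 1 (js s)) c) = wt n c"
    unfolding wt_def by meson
  moreover have "twisted (monom 1 (js s)) c \<noteq> 0"
    using calculation wt_pos[OF assms(1,2)] by (metis less_irrefl wt_zero)
  ultimately show ?thesis
    using True \<open>s \<in> S\<close> by (intro exI[of _ "monom 1 (js s)"]) (auto simp: coeff_monom)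
qed (use exists_light_twist_of_heavy assms in auto)

lemma mindist_ker_code_gt:
  assumes "coprime b n" "L + 2 \<le> card S + dT n g R" "S \<noteq> {}"
  shows "L < mindist n (ker_code n g (sumset_mod n (smult_mod n a S) (smult_mod n b R)))"
proof -
  have "L < wt n c"
    if c: "c \<in> ker_code n g (sumset_mod n (smult_mod n a S) (smult_mod n b R))" "c \<noteq> 0" for c
  proof (rule ccontr)
    assume "\<not> L < wt n c"
    moreover have "c \<in> Fn n"
      using c(1) by (simp add: ker_code_def)
    ultimately obtain h where "\<forall>j. coeff h j \<noteq> 0 \<longrightarrow> j \<in> js ` S" "twisted h c \<noteq> 0"
      "wt n (twisted h c) < dT n g R"
      using exists_light_twist[OF _ c(2) assms(3) _ assms(2)] by auto
    with dT_le_wt_twisted[OF assms(1) c(1)] show False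
      by (meson leD)
  qed
  then have "L + 1 \<le> mindist n (ker_code n g (sumset_mod n (smult_mod n a S) (smult_mod n b R)))"
    using L_le by (intro le_mindistI) (auto simp: Suc_le_eq)
  then show ?thesis
    by simp
qed

end

section \<open>The locating pair\<close>

lemma locating_dimension_bound:
  fixes n k sS sR t l :: nat and D :: "nat \<Rightarrow> nat" and delta :: int and gam :: "nat \<Rightarrow> int"
  assumes "1 \<le> l"
    and delta: "int n - int k = int sS + int sR - 1 + delta"
    and gam: "\<forall>i\<in>{1..l-1}. int sR = int (D i) + int i * int k - int i + gam i"
    and bound: "int t \<le> int l * int n - (int (l * (l + 1) div 2) * (int k - 1)
        + int l * (int sS + delta) + (\<Sum>i=1..l-1. gam i))"
  shows "t \<le> sR + (\<Sum>i=2..l. D (i - 1))"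
proof -
  define X where "X = (\<Sum>i=1..l-1. int i)"
  have "2 * X = int (l - 1) * int l"
    using double_gauss_sum_from_Suc_0[of "l - 1", where 'a = int] assms(1) by (simp add: X_def)
  moreover have "int (2 * (l * (l + 1) div 2)) = int (l * (l + 1))"
    by (simp add: even_two_times_div_two)
  then have "2 * int (l * (l + 1) div 2) = int l * (int l + 1)"
    by (simp only: of_nat_mult of_nat_add of_nat_1 of_nat_numeral)
  ultimately have half: "int (l * (l + 1) div 2) = X + int l"
    using assms(1) by (simp add: of_nat_diff algebra_simps)
  have "(\<Sum>i=2..l. D (i - 1)) = (\<Sum>i=1..l-1. D i)"
    using assms(1) sum.shift_bounds_cl_Suc_ivl[of "\<lambda>i. D (i - 1)" 1 "l - 1"]
    by (simp add: numeral_2_eq_2)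
  moreover have "int (\<Sum>i=1..l-1. D i) = (\<Sum>i=1..l-1. int sR - int i * (int k - 1) - gam i)"
    unfolding of_nat_sum using gam by (intro sum.cong) (auto simp: algebra_simps)
  moreover have "\<dots> = int (l - 1) * int sR - X * (int k - 1) - (\<Sum>i=1..l-1. gam i)"
    by (simp add: sum_subtractf sum_distrib_right X_def)
  ultimately have "int (sR + (\<Sum>i=2..l. D (i - 1)))
      = int l * int sR - X * (int k - 1) - (\<Sum>i=1..l-1. gam i)"
    using assms(1) by (simp add: of_nat_diff algebra_simps)
  moreover have n_eq: "int n = int k + int sS + int sR - 1 + delta"
    using delta by linarith
  have "int l * int n - (int (l * (l + 1) div 2) * (int k - 1) + int l * (int sS + delta)
      + (\<Sum>i=1..l-1. gam i)) = int l * int sR - X * (int k - 1) - (\<Sum>i=1..l-1. gam i)"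
    unfolding half n_eq by (simp add: algebra_simps)
  ultimately show ?thesis
    using bound by linarith
qed

theorem theorem6p4:
  fixes n q a b l t :: nat
    and g :: "'a::field"
    and S R :: "nat set"
  assumes n_pos: "n \<ge> 1"
    and q_coprime: "coprime n q"
    and Fq: "has_subfield_card TYPE('a) q"
    and g_prim: "g ^ n = 1" "\<forall>m. 0 < m \<and> m < n \<longrightarrow> g ^ m \<noteq> 1"
    and l_ge: "l \<ge> 2"
    and ab: "0 < a" "a \<le> n" "0 < b" "b \<le> n" "coprime a n" "coprime b n"
    and SR: "S \<subseteq> {1..n}" "R \<subseteq> {1..n}"
    and Sbar: "closure_card n S + 2 \<le> card S + dT n g R"
    and S_t: "card S > t"
    and dS_t: "dT n g S > t"
    and A_def: "A = gen_code n g (smult_mod n a S)"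
    and B_def: "B = gen_code n g (smult_mod n b R)"
    and C_def: "C = ker_code n g (sumset_mod n (smult_mod n a S) (smult_mod n b R))"
    and k_def: "k = cdim C"
    and cond_i: "\<forall>i\<in>{1..l-1}. starprod (dual n B) (cpow C i) \<subset> Fn n"
    and cond_ii: "\<forall>D. is_cyclic n D \<and> D \<subseteq> B \<and> D \<noteq> {0} \<longrightarrow> \<not> degenerated n D"
    and delta_def: "int n - int k = int (card S) + int (card R) - 1 + delta"
    and gam_def: "\<forall>i\<in>{1..l-1}. int (cdim B) =
        int (cdim (dual n (starprod (dual n B) (cpow C i)))) + int i * int (cdim C) - int i + gam i"
    and bound: "int t \<le> int l * int n - (int (l * (l + 1) div 2) * (int k - 1)
        + int l * (int (card S) + delta) + (\<Sum>i=1..l-1. gam i))"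
  shows "locating_pair n l t A B C"
proof -
  interpret primitive_root n g
    using n_pos g_prim by unfold_locales auto
  have "0 < n"
    using n_pos by simp
  obtain s0 L js where L: "L \<le> n" "closure_card n S = L"
    and js: "\<And>s. s \<in> S \<Longrightarrow> js s < L" "\<And>s. s \<in> S \<Longrightarrow> s mod n = (s0 + js s) mod n"
    "inj_on js S"
    using closure_card_interval[OF \<open>0 < n\<close> SR(1)] by blast
  interpret interval_representation n g a S s0 L js
    using ab(5) SR(1) L js by unfold_locales (auto intro: finite_subset)
  have dim_B: "cdim B = card R"
    unfolding B_def by (rule cdim_gen_code_smult_mod[OF ab(6) SR(2)])
  have "starprod A B \<subseteq> dual n C"
    unfolding A_def B_def C_def by (rule starprod_gen_code_subset_dual)
  moreover have "t < cdim A"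
    unfolding A_def using cdim_gen_code_smult_mod[OF ab(5) SR(1)] S_t by simp
  moreover have "t < mindist n (dual n A)"
    unfolding A_def using dS_t dT_le_mindist_dual_gen_code[OF ab(5)] by (rule less_le_trans)
  moreover have "n < mindist n A + mindist n C"
    using mindist_gen_code mindist_ker_code_gt[OF ab(6)] Sbar L(2) S_t
    unfolding A_def C_def by fastforce
  moreover have "t \<le> cdim B + (\<Sum>i=2..l. cdim (dual n (starprod (dual n B) (cpow C (i - 1)))))"
    using gam_def l_ge unfolding dim_B k_def[symmetric]
    by (intro locating_dimension_bound[OF _ delta_def _ bound]) auto
  ultimately show ?thesis
    unfolding locating_pair_def by simp
qed

end
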